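(* Let $G=(V,E)$ be a graph and, for each $(u,v)\in E$, let $\mathcal P_{u,v}$ be the set of stretch-$k$ paths from $u$ to $v$. A vector $\mathbf x\in\mathbb R^{E}$ is feasible for $\text{LP}_{Spanner}$ if and only if there exist values $f_P$ for each $(u,v)\in E$ and $P\in\mathcal P_{u,v}$ such that $(\mathbf x,\mathbf f)$ is feasible for $\text{LP}^{Flow}_{Spanner}$.
   Context: $\text{LP}^{Flow}_{Spanner}$ has variables $x_e$ ($e\in E$) and $f_P$ ($(u,v)\in E$, $P\in\mathcal P_{u,v}$) and constraints: $\sum_{P\in\mathcal P_{u,v}:e\in P}f_P\le x_e$ for all $(u,v)\in E$ and $e\in E$; $\sum_{P\in\mathcal P_{u,v}}f_P\ge1$ for all $(u,v)\in E$; $x_e\ge0$; $f_P\ge0$ (objective $\min\sum_e x_e$). With $\mathcal Z^{u,v}=\{\mathbf z\in[0,1]^{E}:\sum_{e\in P}z_e\ge1\ \forall P\in\mathcal P_{u,v}\}$, $\text{LP}_{Spanner}$ has variables $x_e$ ($e\in E$) and constraints $\sum_{e\in E}z_ex_e\ge1$ for all $(u,v)\in E$ and all $\mathbf z\in\mathcal Z^{u,v}$, and $x_e\ge0$ for all $e\in E$ (objective $\min\sum_e x_e$). A stretch-$k$ path from $u$ to $v$ is a $u$-to-$v$ path in $G$ of length at most $k\cdot d_G(u,v)$. *)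

theory Defs
  imports Main "HOL-Library.Multiset" Complex_Main
begin

text \<open>A (directed) graph is given by a finite vertex set V and an edge set
E \<subseteq> V \<times> V, together with positive edge lengths w (the unweighted
case is w = 1).\<close>

definition path_edges :: "'a list \<Rightarrow> ('a \<times> 'a) set" where
  "path_edges p = set (zip p (tl p))"

definition path_len :: "('a \<times> 'a \<Rightarrow> real) \<Rightarrow> 'a list \<Rightarrow> real" where
  "path_len w p = sum_list (map w (zip p (tl p)))"

definition is_path :: "('a \<times> 'a) set \<Rightarrow> 'a \<Rightarrow> 'a \<Rightarrow> 'a list \<Rightarrow> bool" where
  "is_path E u v p \<longleftrightarrow> p \<noteq> [] \<and> hd p = u \<and> last p = v \<and> distinct p \<and>
     (\<forall>i. Suc i < length p \<longrightarrow> (p ! i, p ! Suc i) \<in> E)"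

definition dist_G :: "('a \<times> 'a) set \<Rightarrow> ('a \<times> 'a \<Rightarrow> real) \<Rightarrow> 'a \<Rightarrow> 'a \<Rightarrow> real" where
  "dist_G E w u v = Inf (path_len w ` {p. is_path E u v p})"

definition stretch_paths ::
  "('a \<times> 'a) set \<Rightarrow> ('a \<times> 'a \<Rightarrow> real) \<Rightarrow> real \<Rightarrow> 'a \<Rightarrow> 'a \<Rightarrow> 'a list set" where
  "stretch_paths E w k u v = {p. is_path E u v p \<and> path_len w p \<le> k * dist_G E w u v}"

definition Zset :: "('a \<times> 'a) set \<Rightarrow> 'a list set \<Rightarrow> ('a \<times> 'a \<Rightarrow> real) set" where
  "Zset E \<P> = {z. (\<forall>e\<in>E. 0 \<le> z e \<and> z e \<le> 1) \<and>
                   (\<forall>P\<in>\<P>. (\<Sum>e\<in>path_edges P. z e) \<ge> 1)}"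

text \<open>Feasibility for LP_Spanner; \<P> u v is the path set of the demand (u,v).\<close>
definition LP_spanner_feasible ::
  "('a \<times> 'a) set \<Rightarrow> ('a \<Rightarrow> 'a \<Rightarrow> 'a list set) \<Rightarrow> ('a \<times> 'a \<Rightarrow> real) \<Rightarrow> bool" where
  "LP_spanner_feasible E \<P> x \<longleftrightarrow>
     (\<forall>(u,v)\<in>E. \<forall>z\<in>Zset E (\<P> u v). (\<Sum>e\<in>E. z e * x e) \<ge> 1) \<and>
     (\<forall>e\<in>E. x e \<ge> 0)"

text \<open>Feasibility for LP^Flow_Spanner; f (u,v) P is the flow on path P for demand (u,v).\<close>
definition LP_flow_feasible ::
  "('a \<times> 'a) set \<Rightarrow> ('a \<Rightarrow> 'a \<Rightarrow> 'a list set) \<Rightarrow> ('a \<times> 'a \<Rightarrow> real)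
     \<Rightarrow> ('a \<times> 'a \<Rightarrow> 'a list \<Rightarrow> real) \<Rightarrow> bool" where
  "LP_flow_feasible E \<P> x f \<longleftrightarrow>
     (\<forall>(u,v)\<in>E. \<forall>e\<in>E. (\<Sum>P\<in>{P\<in>\<P> u v. e \<in> path_edges P}. f (u,v) P) \<le> x e) \<and>
     (\<forall>(u,v)\<in>E. (\<Sum>P\<in>\<P> u v. f (u,v) P) \<ge> 1) \<and>
     (\<forall>e\<in>E. x e \<ge> 0) \<and>
     (\<forall>(u,v)\<in>E. \<forall>P\<in>\<P> u v. f (u,v) P \<ge> 0)"

end

theory Submission
  imports Defs
begin

text \<open>Both programs are conjunctions over the demands (u, v) \<in> E, so it suffices to treat one
demand with a finite path set \<P>: x dominates every fractional cut z \<in> \<Z> iff x supports a unit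
flow on \<P>. A flow f and a cut z give
1 \<le> (\<Sum>P. f P * (\<Sum>e\<in>P. z e)) = (\<Sum>e. z e * (\<Sum>P\<ni>e. f P)) \<le> (\<Sum>e. z e * x e).
Conversely, if no flow exists, Farkas' lemma (proved here by Fourier--Motzkin elimination) yields
edge weights \<beta> \<ge> 0 and a bound \<gamma> with (\<Sum>e\<in>P. \<beta> e) \<ge> \<gamma> on every path but
(\<Sum>e. \<beta> e * x e) < \<gamma>; then z = min 1 (\<beta> / \<gamma>) is a fractional cut violated by x.\<close>

lemma sum_mset_nonneg:
  fixes f :: "'a \<Rightarrow> 'b::ordered_comm_monoid_add"
  shows "(\<And>c. c \<in># M \<Longrightarrow> 0 \<le> f c) \<Longrightarrow> 0 \<le> (\<Sum>c\<in>#M. f c)"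
  by (induction M) auto

lemma finite_sets_separated:
  fixes A B :: "real set"
  assumes "finite A" "finite B" "\<And>a b. a \<in> A \<Longrightarrow> b \<in> B \<Longrightarrow> a \<le> b"
  obtains t where "\<And>a. a \<in> A \<Longrightarrow> a \<le> t" "\<And>b. b \<in> B \<Longrightarrow> t \<le> b"
proof (cases "A = {}")
  case True
  show ?thesis by (rule that[of "if B = {} then 0 else Min B"]) (use True assms(2) in auto)
next
  case False
  show ?thesis by (rule that[of "Max A"]) (use False assms in auto)
qed

section \<open>Farkas' lemma by Fourier--Motzkin elimination\<close>

type_synonym 'j inequality = "('j \<Rightarrow> real) \<times> real"

definition solves :: "'j set \<Rightarrow> 'j inequality multiset \<Rightarrow> ('j \<Rightarrow> real) \<Rightarrow> bool" where
  "solves J C y \<longleftrightarrow> (\<forall>c\<in>#C. (\<Sum>j\<in>J. fst c j * y j) \<le> snd c)"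

definition farkas_certificate ::
  "'j set \<Rightarrow> 'j inequality multiset \<Rightarrow> ('j inequality \<Rightarrow> real) \<Rightarrow> bool" where
  "farkas_certificate J C \<mu> \<longleftrightarrow> (\<forall>c\<in>#C. 0 \<le> \<mu> c) \<and>
     (\<forall>j\<in>J. (\<Sum>c\<in>#C. \<mu> c * fst c j) = 0) \<and> (\<Sum>c\<in>#C. \<mu> c * snd c) < 0"

text \<open>For p with positive and n with negative x-coefficient, the nonnegative combination in
which x cancels.\<close>

definition fm_combine :: "'j \<Rightarrow> 'j inequality \<Rightarrow> 'j inequality \<Rightarrow> 'j inequality" where
  "fm_combine x p n =
     ((\<lambda>j. - fst n x * fst p j + fst p x * fst n j), - fst n x * snd p + fst p x * snd n)"

definition fm_eliminate :: "'j \<Rightarrow> 'j inequality multiset \<Rightarrow> 'j inequality multiset" where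
  "fm_eliminate x C = {#c \<in># C. fst c x = 0#} +
     (\<Sum>p\<in>#{#c \<in># C. 0 < fst c x#}. image_mset (fm_combine x p) {#c \<in># C. fst c x < 0#})"

lemma sum_fm_combine:
  "(\<Sum>j\<in>F. fst (fm_combine x p n) j * y j) =
     - fst n x * (\<Sum>j\<in>F. fst p j * y j) + fst p x * (\<Sum>j\<in>F. fst n j * y j)"
  unfolding fm_combine_def fst_conv
  by (simp add: sum_distrib_left flip: sum.distrib) (simp add: algebra_simps)

lemma fm_combine_in_fm_eliminate:
  assumes "p \<in># C" "0 < fst p x" "n \<in># C" "fst n x < 0"
  shows "fm_combine x p n \<in># fm_eliminate x C"
proof -
  let ?Neg = "{#c \<in># C. fst c x < 0#}"
  have "fm_combine x p n \<in># image_mset (fm_combine x p) ?Neg"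
    using assms by simp
  moreover have "image_mset (fm_combine x p) ?Neg \<in>#
      image_mset (\<lambda>q. image_mset (fm_combine x q) ?Neg) {#c \<in># C. 0 < fst c x#}"
    using assms by simp
  ultimately show ?thesis
    unfolding fm_eliminate_def by (meson in_Union_mset_iff union_iff)
qed

lemma fm_eliminate_solvable:
  assumes "finite F" "x \<notin> F" and y: "solves F (fm_eliminate x C) y"
  shows "\<exists>t. solves (insert x F) C (y(x := t))"
proof -
  define s where "s c = (\<Sum>j\<in>F. fst c j * y j)" for c :: "'a inequality"
  define bound where "bound c = (snd c - s c) / fst c x" for c
  define Pos where "Pos = {#c \<in># C. 0 < fst c x#}"
  define Neg where "Neg = {#c \<in># C. fst c x < 0#}"
  \<comment> \<open>Each inequality of C bounds the value t of x from above or from below; the combined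
      inequalities say that every lower bound lies below every upper bound.\<close>
  have bounds_ordered: "bound n \<le> bound p" if "p \<in># Pos" "n \<in># Neg" for p n
  proof -
    have "fm_combine x p n \<in># fm_eliminate x C"
      using that by (intro fm_combine_in_fm_eliminate) (auto simp: Pos_def Neg_def)
    then have "(\<Sum>j\<in>F. fst (fm_combine x p n) j * y j) \<le> snd (fm_combine x p n)"
      using y unfolding solves_def by blast
    then have "- fst n x * s p + fst p x * s n \<le> - fst n x * snd p + fst p x * snd n"
      unfolding sum_fm_combine by (simp add: s_def fm_combine_def)
    with that show ?thesis
      by (auto simp: bound_def Pos_def Neg_def divide_simps) (simp add: algebra_simps)
  qed
  obtain t where lower: "\<And>n. n \<in># Neg \<Longrightarrow> bound n \<le> t"
    and upper: "\<And>p. p \<in># Pos \<Longrightarrow> t \<le> bound p"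
    by (rule finite_sets_separated[of "bound ` set_mset Neg" "bound ` set_mset Pos"])
      (use bounds_ordered in blast)+
  have satisfied: "fst c x * t + s c \<le> snd c" if "c \<in># C" for c
  proof (cases "fst c x" "0::real" rule: linorder_cases)
    case less
    then show ?thesis
      using lower[of c] that by (simp add: Neg_def bound_def divide_simps mult.commute)
  next
    case equal
    then have "c \<in># fm_eliminate x C" using that by (simp add: fm_eliminate_def)
    then show ?thesis using y equal by (simp add: solves_def s_def)
  next
    case greater
    then show ?thesis
      using upper[of c] that by (simp add: Pos_def bound_def divide_simps mult.commute)
  qed
  have lhs: "(\<Sum>j\<in>insert x F. fst c j * (y(x := t)) j) = fst c x * t + s c" for c
    using assms(1,2) unfolding s_def by (auto intro!: sum.cong)
  have "solves (insert x F) C (y(x := t))"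
    unfolding solves_def lhs using satisfied by blast
  then show ?thesis ..
qed

text \<open>The transpose of fm_eliminate: the multiplier of each combination is passed back to its two
parents, weighted as in fm_combine.\<close>

definition fm_lift ::
  "'j \<Rightarrow> 'j inequality multiset \<Rightarrow> ('j inequality \<Rightarrow> real) \<Rightarrow> 'j inequality \<Rightarrow> real" where
  "fm_lift x C \<mu> c =
     (if 0 < fst c x then (\<Sum>n\<in>#{#d \<in># C. fst d x < 0#}. \<mu> (fm_combine x c n) * - fst n x)
      else if fst c x < 0 then (\<Sum>p\<in>#{#d \<in># C. 0 < fst d x#}. \<mu> (fm_combine x p c) * fst p x)
      else \<mu> c)"

lemma sum_mset_fm_lift:
  assumes g: "\<And>p n. g (fm_combine x p n) = - fst n x * g p + fst p x * g n"
  shows "(\<Sum>c\<in>#C. fm_lift x C \<mu> c * g c) = (\<Sum>c\<in>#fm_eliminate x C. \<mu> c * g c)"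
proof -
  define Zero where "Zero = {#c \<in># C. fst c x = 0#}"
  define Pos where "Pos = {#c \<in># C. 0 < fst c x#}"
  define Neg where "Neg = {#c \<in># C. fst c x < 0#}"
  have split: "(\<Sum>c\<in>#C. f c) = (\<Sum>c\<in>#Zero. f c) + (\<Sum>c\<in>#Pos. f c) + (\<Sum>c\<in>#Neg. f c)"
    for f :: "'a inequality \<Rightarrow> real"
    unfolding Zero_def Pos_def Neg_def by (induction C) (auto simp: algebra_simps)
  have "(\<Sum>c\<in>#Zero. fm_lift x C \<mu> c * g c) = (\<Sum>c\<in>#Zero. \<mu> c * g c)"
    by (rule arg_cong[where f = sum_mset], rule image_mset_cong) (simp add: Zero_def fm_lift_def)
  moreover have "(\<Sum>c\<in>#Pos. fm_lift x C \<mu> c * g c) =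
      (\<Sum>p\<in>#Pos. \<Sum>n\<in>#Neg. \<mu> (fm_combine x p n) * - fst n x * g p)"
    by (rule arg_cong[where f = sum_mset], rule image_mset_cong)
      (simp add: Pos_def Neg_def fm_lift_def sum_mset_distrib_right)
  moreover have "(\<Sum>c\<in>#Neg. fm_lift x C \<mu> c * g c) =
      (\<Sum>p\<in>#Pos. \<Sum>n\<in>#Neg. \<mu> (fm_combine x p n) * fst p x * g n)"
  proof -
    have "(\<Sum>c\<in>#Neg. fm_lift x C \<mu> c * g c) =
        (\<Sum>n\<in>#Neg. \<Sum>p\<in>#Pos. \<mu> (fm_combine x p n) * fst p x * g n)"
      by (rule arg_cong[where f = sum_mset], rule image_mset_cong)
        (simp add: Pos_def Neg_def fm_lift_def sum_mset_distrib_right)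
    then show ?thesis by (simp add: sum_mset.swap[of _ Neg Pos])
  qed
  moreover have "(\<Sum>c\<in>#(\<Sum>p\<in>#Pos. image_mset (fm_combine x p) Neg). \<mu> c * g c) =
      (\<Sum>p\<in>#Pos. \<Sum>n\<in>#Neg. \<mu> (fm_combine x p n) * g (fm_combine x p n))"
    by (induction Pos) (auto simp: multiset.map_comp o_def)
  ultimately show ?thesis
    unfolding split[of "\<lambda>c. fm_lift x C \<mu> c * g c"] fm_eliminate_def
    by (simp add: Zero_def Pos_def Neg_def g algebra_simps flip: sum_mset.distrib)
qed

lemma fm_eliminate_eliminates:
  assumes "c \<in># fm_eliminate x C" shows "fst c x = 0"
  using assms by (auto simp: fm_eliminate_def fm_combine_def)

lemma farkas_certificate_fm_lift:
  assumes "farkas_certificate F (fm_eliminate x C) \<mu>"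
  shows "farkas_certificate (insert x F) C (fm_lift x C \<mu>)"
proof -
  have \<mu>_nonneg: "0 \<le> \<mu> c" if "c \<in># fm_eliminate x C" for c
    using assms that unfolding farkas_certificate_def by blast
  have combined_nonneg: "0 \<le> \<mu> (fm_combine x p n)"
    if "p \<in># C" "0 < fst p x" "n \<in># C" "fst n x < 0" for p n
    using that by (intro \<mu>_nonneg fm_combine_in_fm_eliminate)
  have "0 \<le> fm_lift x C \<mu> c" if c: "c \<in># C" for c
  proof (cases "fst c x" "0::real" rule: linorder_cases)
    case less
    have "0 \<le> \<mu> (fm_combine x p c) * fst p x" if "p \<in># {#d \<in># C. 0 < fst d x#}" for p
      using that c less by (intro mult_nonneg_nonneg combined_nonneg) auto
    then have "0 \<le> (\<Sum>p\<in>#{#d \<in># C. 0 < fst d x#}. \<mu> (fm_combine x p c) * fst p x)"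
      by (rule sum_mset_nonneg)
    with less show ?thesis by (simp add: fm_lift_def)
  next
    case equal
    then have "c \<in># fm_eliminate x C" using c by (simp add: fm_eliminate_def)
    then show ?thesis using equal \<mu>_nonneg by (simp add: fm_lift_def)
  next
    case greater
    have "0 \<le> \<mu> (fm_combine x c n) * - fst n x" if "n \<in># {#d \<in># C. fst d x < 0#}" for n
      using that c greater by (intro mult_nonneg_nonneg combined_nonneg) auto
    then have "0 \<le> (\<Sum>n\<in>#{#d \<in># C. fst d x < 0#}. \<mu> (fm_combine x c n) * - fst n x)"
      by (rule sum_mset_nonneg)
    with greater show ?thesis by (simp add: fm_lift_def)
  qed
  moreover have "(\<Sum>c\<in>#C. fm_lift x C \<mu> c * fst c j) = 0" if "j \<in> insert x F" for j
  proof -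
    have "(\<Sum>c\<in>#C. fm_lift x C \<mu> c * fst c j) = (\<Sum>c\<in>#fm_eliminate x C. \<mu> c * fst c j)"
      by (rule sum_mset_fm_lift) (simp add: fm_combine_def)
    also have "\<dots> = 0"
      using assms that unfolding farkas_certificate_def
      by (auto simp: fm_eliminate_eliminates sum_mset.neutral)
    finally show ?thesis .
  qed
  moreover have "(\<Sum>c\<in>#C. fm_lift x C \<mu> c * snd c) < 0"
  proof -
    have "(\<Sum>c\<in>#C. fm_lift x C \<mu> c * snd c) = (\<Sum>c\<in>#fm_eliminate x C. \<mu> c * snd c)"
      by (rule sum_mset_fm_lift) (simp add: fm_combine_def)
    also have "\<dots> < 0"
      using assms unfolding farkas_certificate_def by blast
    finally show ?thesis .
  qed
  ultimately show ?thesis unfolding farkas_certificate_def by blast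
qed

theorem farkas_lemma:
  assumes "finite J" and "\<nexists>y. solves J C y"
  shows "\<exists>\<mu>. farkas_certificate J C \<mu>"
  using assms
proof (induction J arbitrary: C rule: finite_induct)
  case (empty C)
  then obtain c0 where c0: "c0 \<in># C" "snd c0 < 0"
    by (auto simp: solves_def not_le)
  have "(\<Sum>c\<in>#C. (if c = c0 then 1 else 0) * snd c) = (\<Sum>c\<in>#C. if c = c0 then snd c0 else 0)"
    by (rule arg_cong[where f = sum_mset], rule image_mset_cong) simp
  also have "\<dots> = snd c0 * of_nat (count C c0)"
    by (rule sum_mset_delta)
  also have "\<dots> < 0"
    using c0 by (simp add: mult_neg_pos)
  finally have "farkas_certificate {} C (\<lambda>c. if c = c0 then 1 else 0)"
    unfolding farkas_certificate_def by simp
  then show ?case by blast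
next
  case (insert x F C)
  have "\<nexists>y. solves F (fm_eliminate x C) y"
    using fm_eliminate_solvable[OF insert.hyps] insert.prems by blast
  then obtain \<mu> where "farkas_certificate F (fm_eliminate x C) \<mu>"
    using insert.IH by blast
  then have "farkas_certificate (insert x F) C (fm_lift x C \<mu>)"
    by (rule farkas_certificate_fm_lift)
  then show ?case by blast
qed

lemma path_edges_conv_nth:
  "path_edges p = {(p ! i, p ! Suc i) | i. Suc i < length p}"
  unfolding path_edges_def set_zip by (force simp: nth_tl)

lemma path_edges_subset:
  assumes "is_path E u v p" shows "path_edges p \<subseteq> E"
  using assms unfolding is_path_def path_edges_conv_nth by auto

lemma set_path_subset:
  assumes "is_path E u v p" shows "set p \<subseteq> insert v (fst ` E)"
proof
  fix y assume "y \<in> set p"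
  then obtain i where i: "i < length p" "y = p ! i" by (auto simp: in_set_conv_nth)
  show "y \<in> insert v (fst ` E)"
  proof (cases "Suc i < length p")
    case True
    then have "(y, p ! Suc i) \<in> E" using assms i unfolding is_path_def by auto
    then show ?thesis by force
  next
    case False
    then have "i = length p - 1" "p \<noteq> []" using i by auto
    then have "y = last p" using i by (simp add: last_conv_nth)
    then show ?thesis using assms unfolding is_path_def by simp
  qed
qed

lemma finite_paths:
  assumes "finite E" shows "finite {p. is_path E u v p}"
proof (rule finite_subset)
  show "{p. is_path E u v p} \<subseteq> {p. set p \<subseteq> insert v (fst ` E) \<and> distinct p}"
  proof
    fix p assume "p \<in> {p. is_path E u v p}"
    then have "is_path E u v p" by simp
    then show "p \<in> {p. set p \<subseteq> insert v (fst ` E) \<and> distinct p}"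
      using set_path_subset[of E u v p] by (simp add: is_path_def)
  qed
  show "finite {p. set p \<subseteq> insert v (fst ` E) \<and> distinct p}"
    using assms by (intro finite_subset_distinct) auto
qed

lemma finite_stretch_paths:
  assumes "finite E" shows "finite (stretch_paths E w k u v)"
  using finite_paths[OF assms, of u v] unfolding stretch_paths_def by (rule rev_finite_subset) auto

section \<open>Unit flows and fractional cuts for one demand\<close>

definition unit_path_flow ::
  "('a \<times> 'a) set \<Rightarrow> 'a list set \<Rightarrow> ('a \<times> 'a \<Rightarrow> real) \<Rightarrow> ('a list \<Rightarrow> real) \<Rightarrow> bool" where
  "unit_path_flow E Ps x g \<longleftrightarrow>
     (\<forall>e\<in>E. (\<Sum>P\<in>{P\<in>Ps. e \<in> path_edges P}. g P) \<le> x e) \<and>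
     1 \<le> (\<Sum>P\<in>Ps. g P) \<and> (\<forall>P\<in>Ps. 0 \<le> g P)"

lemma LP_flow_feasible_iff:
  "LP_flow_feasible E \<P> x f \<longleftrightarrow>
     (\<forall>(u, v)\<in>E. unit_path_flow E (\<P> u v) x (f (u, v))) \<and> (\<forall>e\<in>E. 0 \<le> x e)"
  unfolding LP_flow_feasible_def unit_path_flow_def by auto

lemma unit_path_flow_covers_Zset:
  assumes "finite E" "finite Ps" and sub: "\<And>P. P \<in> Ps \<Longrightarrow> path_edges P \<subseteq> E"
    and g: "unit_path_flow E Ps x g" and z: "z \<in> Zset E Ps"
  shows "1 \<le> (\<Sum>e\<in>E. z e * x e)"
proof -
  have g_nonneg: "0 \<le> g P" and z_path: "1 \<le> (\<Sum>e\<in>path_edges P. z e)" if "P \<in> Ps" for P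
    using g z that unfolding unit_path_flow_def Zset_def by auto
  have edges: "{e \<in> E. e \<in> path_edges P} = path_edges P" if "P \<in> Ps" for P
    using sub[OF that] by blast
  have "1 \<le> (\<Sum>P\<in>Ps. g P)"
    using g unfolding unit_path_flow_def by blast
  also have "\<dots> \<le> (\<Sum>P\<in>Ps. g P * (\<Sum>e\<in>path_edges P. z e))"
    using mult_left_mono[OF z_path g_nonneg] by (intro sum_mono) simp
  also have "\<dots> = (\<Sum>P\<in>Ps. \<Sum>e\<in>{e \<in> E. e \<in> path_edges P}. g P * z e)"
    by (intro sum.cong) (simp_all add: edges sum_distrib_left)
  also have "\<dots> = (\<Sum>e\<in>E. (\<Sum>P\<in>{P \<in> Ps. e \<in> path_edges P}. g P) * z e)"
    using assms(1,2) by (simp add: sum.swap_restrict[of Ps E] sum_distrib_right)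
  also have "\<dots> \<le> (\<Sum>e\<in>E. x e * z e)"
    using g z unfolding unit_path_flow_def Zset_def by (intro sum_mono mult_right_mono) auto
  finally show ?thesis by (simp add: mult.commute)
qed

definition nonneg_constraint :: "'p \<Rightarrow> 'p inequality" where
  "nonneg_constraint P = ((\<lambda>Q. if Q = P then -1 else 0), 0)"

definition capacity_constraint :: "('a \<times> 'a \<Rightarrow> real) \<Rightarrow> 'a \<times> 'a \<Rightarrow> 'a list inequality" where
  "capacity_constraint x e = ((\<lambda>Q. if e \<in> path_edges Q then 1 else 0), x e)"

definition demand_constraint :: "'p inequality" where
  "demand_constraint = ((\<lambda>Q. -1), -1)"

definition flow_constraints ::
  "('a \<times> 'a) set \<Rightarrow> 'a list set \<Rightarrow> ('a \<times> 'a \<Rightarrow> real) \<Rightarrow> 'a list inequality multiset" where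
  "flow_constraints E Ps x = image_mset nonneg_constraint (mset_set Ps) +
     image_mset (capacity_constraint x) (mset_set E) + {#demand_constraint#}"

lemma sum_mset_flow_constraints:
  shows "(\<Sum>c\<in>#flow_constraints E Ps x. h c) =
    (\<Sum>P\<in>Ps. h (nonneg_constraint P)) + (\<Sum>e\<in>E. h (capacity_constraint x e)) + h demand_constraint"
  unfolding flow_constraints_def by (simp add: sum_unfold_sum_mset multiset.map_comp o_def add_ac)

lemma set_mset_flow_constraints:
  assumes "finite E" "finite Ps"
  shows "set_mset (flow_constraints E Ps x) =
    nonneg_constraint ` Ps \<union> capacity_constraint x ` E \<union> {demand_constraint}"
  using assms unfolding flow_constraints_def by auto

lemma solves_flow_constraints_iff:
  assumes "finite E" "finite Ps"
  shows "solves Ps (flow_constraints E Ps x) g \<longleftrightarrow> unit_path_flow E Ps x g"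
proof -
  have nonneg: "(\<Sum>Q\<in>Ps. fst (nonneg_constraint P) Q * g Q) = - g P" if "P \<in> Ps" for P
  proof -
    have "(\<Sum>Q\<in>Ps. fst (nonneg_constraint P) Q * g Q) = (\<Sum>Q\<in>Ps. if Q = P then - g Q else 0)"
      by (rule sum.cong) (simp_all add: nonneg_constraint_def)
    then show ?thesis using assms(2) that by simp
  qed
  have capacity: "(\<Sum>Q\<in>Ps. fst (capacity_constraint x e) Q * g Q) =
      (\<Sum>Q\<in>{Q \<in> Ps. e \<in> path_edges Q}. g Q)" for e
  proof -
    have "(\<Sum>Q\<in>Ps. fst (capacity_constraint x e) Q * g Q) =
        (\<Sum>Q\<in>Ps. if e \<in> path_edges Q then g Q else 0)"
      by (rule sum.cong) (simp_all add: capacity_constraint_def)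
    then show ?thesis using assms(2) by (simp add: sum.inter_filter)
  qed
  have demand: "(\<Sum>Q\<in>Ps. fst demand_constraint Q * g Q) = - (\<Sum>Q\<in>Ps. g Q)"
    by (simp add: demand_constraint_def sum_negf)
  have rhs: "snd (nonneg_constraint P) = 0" "snd (capacity_constraint x e) = x e"
    "snd demand_constraint = -1" for P e
    by (simp_all add: nonneg_constraint_def capacity_constraint_def demand_constraint_def)
  show ?thesis
    unfolding solves_def set_mset_flow_constraints[OF assms] unit_path_flow_def
    by (auto simp: ball_Un Ball_image_comp o_def nonneg capacity demand rhs)
qed

lemma sum_mset_flow_constraints_fst:
  assumes "finite E" "finite Ps" "P \<in> Ps" "path_edges P \<subseteq> E"
  shows "(\<Sum>c\<in>#flow_constraints E Ps x. \<mu> c * fst c P) =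
    (\<Sum>e\<in>path_edges P. \<mu> (capacity_constraint x e)) - \<mu> (nonneg_constraint P) - \<mu> demand_constraint"
proof -
  have "(\<Sum>Q\<in>Ps. \<mu> (nonneg_constraint Q) * fst (nonneg_constraint Q) P) =
      (\<Sum>Q\<in>Ps. if P = Q then - \<mu> (nonneg_constraint Q) else 0)"
    by (rule sum.cong) (simp_all add: nonneg_constraint_def)
  also have "\<dots> = - \<mu> (nonneg_constraint P)"
    using assms(2,3) by simp
  finally have nonneg: "(\<Sum>Q\<in>Ps. \<mu> (nonneg_constraint Q) * fst (nonneg_constraint Q) P) =
      - \<mu> (nonneg_constraint P)" .
  have "(\<Sum>e\<in>E. \<mu> (capacity_constraint x e) * fst (capacity_constraint x e) P) =
      (\<Sum>e\<in>E. if e \<in> path_edges P then \<mu> (capacity_constraint x e) else 0)"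
    by (rule sum.cong) (simp_all add: capacity_constraint_def)
  also have "\<dots> = (\<Sum>e\<in>path_edges P. \<mu> (capacity_constraint x e))"
    using assms(1,4) by (simp add: sum.inter_restrict[symmetric] Int_absorb1)
  finally have capacity:
    "(\<Sum>e\<in>E. \<mu> (capacity_constraint x e) * fst (capacity_constraint x e) P) =
      (\<Sum>e\<in>path_edges P. \<mu> (capacity_constraint x e))" .
  show ?thesis
    unfolding sum_mset_flow_constraints nonneg capacity by (simp add: demand_constraint_def)
qed

lemma sum_mset_flow_constraints_snd:
  "(\<Sum>c\<in>#flow_constraints E Ps x. \<mu> c * snd c) =
    (\<Sum>e\<in>E. \<mu> (capacity_constraint x e) * x e) - \<mu> demand_constraint"
  unfolding sum_mset_flow_constraints
  by (simp add: nonneg_constraint_def capacity_constraint_def demand_constraint_def)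

lemma no_unit_path_flow_imp_dual:
  assumes fin: "finite E" "finite Ps" and sub: "\<And>P. P \<in> Ps \<Longrightarrow> path_edges P \<subseteq> E"
    and no_flow: "\<nexists>g. unit_path_flow E Ps x g"
  obtains \<beta> \<gamma> where "\<And>e. e \<in> E \<Longrightarrow> 0 \<le> \<beta> e"
    and "\<And>P. P \<in> Ps \<Longrightarrow> \<gamma> \<le> (\<Sum>e\<in>path_edges P. \<beta> e)"
    and "(\<Sum>e\<in>E. \<beta> e * x e) < \<gamma>"
proof -
  let ?C = "flow_constraints E Ps x"
  obtain \<mu> where \<mu>: "farkas_certificate Ps ?C \<mu>"
    using farkas_lemma[OF fin(2)] no_flow solves_flow_constraints_iff[OF fin] by blast
  have \<mu>_nonneg: "0 \<le> \<mu> c" if "c \<in># ?C" for c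
    using \<mu> that unfolding farkas_certificate_def by blast
  show ?thesis
  proof (rule that)
    show "0 \<le> \<mu> (capacity_constraint x e)" if "e \<in> E" for e
      using that by (intro \<mu>_nonneg) (simp add: set_mset_flow_constraints[OF fin])
  next
    fix P assume P: "P \<in> Ps"
    have "0 \<le> \<mu> (nonneg_constraint P)"
      using P by (intro \<mu>_nonneg) (simp add: set_mset_flow_constraints[OF fin])
    moreover have "(\<Sum>c\<in>#?C. \<mu> c * fst c P) = 0"
      using \<mu> P unfolding farkas_certificate_def by blast
    ultimately show "\<mu> demand_constraint \<le> (\<Sum>e\<in>path_edges P. \<mu> (capacity_constraint x e))"
      unfolding sum_mset_flow_constraints_fst[OF fin P sub[OF P]] by linarith
  next
    show "(\<Sum>e\<in>E. \<mu> (capacity_constraint x e) * x e) < \<mu> demand_constraint"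
      using \<mu> unfolding farkas_certificate_def sum_mset_flow_constraints_snd by linarith
  qed
qed

lemma dual_imp_violated_Zset:
  assumes \<beta>: "\<And>e. e \<in> E \<Longrightarrow> 0 \<le> \<beta> e"
    and paths: "\<And>P. P \<in> Ps \<Longrightarrow> \<gamma> \<le> (\<Sum>e\<in>path_edges P. \<beta> e)"
    and violated: "(\<Sum>e\<in>E. \<beta> e * x e) < \<gamma>"
    and x: "\<And>e. e \<in> E \<Longrightarrow> 0 \<le> x e"
    and sub: "\<And>P. P \<in> Ps \<Longrightarrow> path_edges P \<subseteq> E"
  shows "\<exists>z\<in>Zset E Ps. (\<Sum>e\<in>E. z e * x e) < 1"
proof
  have "0 \<le> (\<Sum>e\<in>E. \<beta> e * x e)"
    using \<beta> x by (intro sum_nonneg mult_nonneg_nonneg)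
  with violated have \<gamma>: "0 < \<gamma>" by linarith
  define z where "z e = min 1 (\<beta> e / \<gamma>)" for e
  show "z \<in> Zset E Ps"
    unfolding Zset_def
  proof (intro CollectI conjI ballI)
    show "0 \<le> z e" "z e \<le> 1" if "e \<in> E" for e
      using \<beta>[OF that] \<gamma> by (simp_all add: z_def)
  next
    fix P assume P: "P \<in> Ps"
    show "1 \<le> (\<Sum>e\<in>path_edges P. z e)"
    proof (cases "\<exists>e\<in>path_edges P. \<gamma> \<le> \<beta> e")
      case True
      then obtain e0 where e0: "e0 \<in> path_edges P" "\<gamma> \<le> \<beta> e0" by blast
      have "z e0 \<le> (\<Sum>e\<in>path_edges P. z e)"
        using e0(1) sub[OF P] \<beta> \<gamma>
        by (intro member_le_sum) (auto simp: z_def path_edges_def)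
      then show ?thesis using e0(2) \<gamma> by (simp add: z_def)
    next
      case False
      then have "(\<Sum>e\<in>path_edges P. z e) = (\<Sum>e\<in>path_edges P. \<beta> e / \<gamma>)"
        using \<gamma> by (intro sum.cong) (auto simp: z_def)
      also have "\<dots> = (\<Sum>e\<in>path_edges P. \<beta> e) / \<gamma>"
        by (simp add: sum_divide_distrib)
      finally show ?thesis using paths[OF P] \<gamma> by simp
    qed
  qed
  have "(\<Sum>e\<in>E. z e * x e) \<le> (\<Sum>e\<in>E. \<beta> e / \<gamma> * x e)"
    using x by (intro sum_mono mult_right_mono) (auto simp: z_def)
  also have "\<dots> = (\<Sum>e\<in>E. \<beta> e * x e) / \<gamma>"
    by (simp add: sum_divide_distrib)
  also have "\<dots> < 1"
    using violated \<gamma> by simp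
  finally show "(\<Sum>e\<in>E. z e * x e) < 1" .
qed

lemma Zset_covered_iff_unit_path_flow:
  assumes "finite E" "finite Ps" "\<And>P. P \<in> Ps \<Longrightarrow> path_edges P \<subseteq> E"
    and "\<And>e. e \<in> E \<Longrightarrow> 0 \<le> x e"
  shows "(\<forall>z\<in>Zset E Ps. 1 \<le> (\<Sum>e\<in>E. z e * x e)) \<longleftrightarrow> (\<exists>g. unit_path_flow E Ps x g)"
proof
  assume covered: "\<forall>z\<in>Zset E Ps. 1 \<le> (\<Sum>e\<in>E. z e * x e)"
  show "\<exists>g. unit_path_flow E Ps x g"
  proof (rule ccontr)
    assume no_flow: "\<nexists>g. unit_path_flow E Ps x g"
    obtain \<beta> \<gamma> where "\<And>e. e \<in> E \<Longrightarrow> 0 \<le> \<beta> e"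
      "\<And>P. P \<in> Ps \<Longrightarrow> \<gamma> \<le> (\<Sum>e\<in>path_edges P. \<beta> e)" "(\<Sum>e\<in>E. \<beta> e * x e) < \<gamma>"
      using no_unit_path_flow_imp_dual[OF assms(1-3) no_flow] by blast
    then have "\<exists>z\<in>Zset E Ps. (\<Sum>e\<in>E. z e * x e) < 1"
      using assms(4,3) by (rule dual_imp_violated_Zset)
    then show False
      using covered by (meson not_less)
  qed
next
  show "\<exists>g. unit_path_flow E Ps x g \<Longrightarrow> \<forall>z\<in>Zset E Ps. 1 \<le> (\<Sum>e\<in>E. z e * x e)"
    using unit_path_flow_covers_Zset[OF assms(1-3)] by blast
qed

lemma LP_spanner_feasible_iff_LP_flow_feasible:
  assumes "finite E" and "\<And>u v. (u, v) \<in> E \<Longrightarrow> finite (\<P> u v)"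
    and "\<And>u v P. (u, v) \<in> E \<Longrightarrow> P \<in> \<P> u v \<Longrightarrow> path_edges P \<subseteq> E"
  shows "LP_spanner_feasible E \<P> x \<longleftrightarrow> (\<exists>f. LP_flow_feasible E \<P> x f)"
proof
  assume "LP_spanner_feasible E \<P> x"
  then have x: "\<forall>e\<in>E. 0 \<le> x e"
    and covered: "\<forall>(u, v)\<in>E. \<forall>z\<in>Zset E (\<P> u v). 1 \<le> (\<Sum>e\<in>E. z e * x e)"
    unfolding LP_spanner_feasible_def by blast+
  have "\<forall>uv\<in>E. \<exists>g. unit_path_flow E (\<P> (fst uv) (snd uv)) x g"
  proof
    fix uv assume "uv \<in> E"
    then show "\<exists>g. unit_path_flow E (\<P> (fst uv) (snd uv)) x g"
      using covered x assms Zset_covered_iff_unit_path_flow[of E "\<P> (fst uv) (snd uv)" x]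
      by (cases uv) auto
  qed
  then obtain f where "\<forall>uv\<in>E. unit_path_flow E (\<P> (fst uv) (snd uv)) x (f uv)"
    by (metis bchoice)
  then have "LP_flow_feasible E \<P> x f"
    unfolding LP_flow_feasible_iff using x by auto
  then show "\<exists>f. LP_flow_feasible E \<P> x f" by blast
next
  assume "\<exists>f. LP_flow_feasible E \<P> x f"
  then obtain f where x: "\<forall>e\<in>E. 0 \<le> x e"
    and flows: "\<forall>(u, v)\<in>E. unit_path_flow E (\<P> u v) x (f (u, v))"
    unfolding LP_flow_feasible_iff by blast
  have "\<forall>z\<in>Zset E (\<P> u v). 1 \<le> (\<Sum>e\<in>E. z e * x e)" if "(u, v) \<in> E" for u v
    using that flows x assms Zset_covered_iff_unit_path_flow[of E "\<P> u v" x] by auto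
  then show "LP_spanner_feasible E \<P> x"
    unfolding LP_spanner_feasible_def using x by blast
qed

theorem theorem5:
  fixes V :: "'a set" and E :: "('a \<times> 'a) set" and w :: "'a \<times> 'a \<Rightarrow> real"
    and k :: real and x :: "'a \<times> 'a \<Rightarrow> real"
  assumes "finite V" and "E \<subseteq> V \<times> V" and "\<forall>e\<in>E. w e > 0"
  shows "LP_spanner_feasible E (stretch_paths E w k) x \<longleftrightarrow>
         (\<exists>f. LP_flow_feasible E (stretch_paths E w k) x f)"
proof (rule LP_spanner_feasible_iff_LP_flow_feasible)
  show "finite E"
    using assms(1,2) by (simp add: finite_subset)
  then show "finite (stretch_paths E w k u v)" for u v
    by (rule finite_stretch_paths)
  show "path_edges P \<subseteq> E" if "P \<in> stretch_paths E w k u v" for u v P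
    using that unfolding stretch_paths_def by (auto dest: path_edges_subset)
qed

end
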